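(* Let $f:\mathbb{R}\to\mathbb{R}$ and $g:\mathbb{R}\to\mathbb{R}$ be given with $\mathrm{Cr}(f)<\infty$, and let $\mathcal{I}_f$ denote the partition of $\mathbb{R}$ into the $\mathrm{Cr}(f)$ maximal intervals on which $\tilde f$ is constant. Then \[ \frac{1}{\mathrm{Cr}(f)}\sum_{U\in\mathcal{I}_f}\mathbf{1}\big[\forall x\in U:\ \tilde f(x)\neq\tilde g(x)\big]\ \ge\ \frac12\left(1-2\,\frac{\mathrm{Cr}(g)}{\mathrm{Cr}(f)}\right) \] (where the right-hand side is $-\infty$ if $\mathrm{Cr}(g)=\infty$).
   Context: For $h:\mathbb{R}\to\mathbb{R}$ let $\tilde h(x)=\mathbf{1}[h(x)\ge 1/2]$. The crossing number $\mathrm{Cr}(h)$ is the minimum number of intervals in a partition of $\mathbb{R}$ into intervals (possibly degenerate, unbounded, open, closed or half-open) on each of which $\tilde h$ is constant, i.e. the number of maximal intervals on which $\tilde h$ is constant. *)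

theory Defs
  imports "HOL-Analysis.Analysis" "HOL-Library.Extended_Nat"
begin

text \<open>Thresholded function: h~(x) = 1[h(x) >= 1/2], as a boolean.\<close>
definition thr :: "(real \<Rightarrow> real) \<Rightarrow> real \<Rightarrow> bool" where
  "thr h x \<longleftrightarrow> h x \<ge> 1/2"

definition const_on :: "(real \<Rightarrow> real) \<Rightarrow> real set \<Rightarrow> bool" where
  "const_on h U \<longleftrightarrow> (\<forall>x\<in>U. \<forall>y\<in>U. thr h x = thr h y)"

definition good_partition :: "(real \<Rightarrow> real) \<Rightarrow> real set set \<Rightarrow> bool" where
  "good_partition h P \<longleftrightarrow>
     \<Union>P = UNIV \<and> {} \<notin> P \<and> (\<forall>U\<in>P. \<forall>V\<in>P. U \<noteq> V \<longrightarrow> U \<inter> V = {}) \<and>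
     (\<forall>U\<in>P. is_interval U \<and> const_on h U)"

text \<open>Crossing number: minimum number of intervals in such a partition
 (infinity if no finite such partition exists).\<close>
definition Cr :: "(real \<Rightarrow> real) \<Rightarrow> enat" where
  "Cr h = Inf {enat (card P) | P. finite P \<and> good_partition h P}"

definition maxints :: "(real \<Rightarrow> real) \<Rightarrow> real set set" where
  "maxints h = {U. U \<noteq> {} \<and> is_interval U \<and> const_on h U \<and>
      (\<forall>V. is_interval V \<and> const_on h V \<and> U \<subseteq> V \<longrightarrow> V = U)}"

end

theory Submission
  imports Defs
begin

text \<open>
Let \<open>B\<close> be the maximal intervals of \<open>f\<close> containing a point where the thresholded \<open>f\<close> and
\<open>g\<close> agree, and \<open>G\<close> those on which they disagree everywhere; there are \<open>Cr f\<close> maximal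
intervals, so \<open>Cr f = |B| + |G|\<close>. Pick an agreement point in each member of \<open>B\<close> and sort
these points inside each cell of an optimal partition for \<open>g\<close>. Between two consecutive
points of one cell the thresholded \<open>f\<close> takes the same value at both ends but the points lie
in different maximal intervals, so some maximal interval of the opposite value lies strictly
between them; it sits inside the cell, where \<open>g\<close> is constant, hence belongs to \<open>G\<close>.
This gives \<open>|B| \<le> |G| + Cr g\<close>, i.e. \<open>2 |G| \<ge> Cr f - Cr g\<close>.
\<close>

lemma is_interval_subset_greaterThanLessThan:
  fixes W :: "real set"
  assumes "is_interval W" "z \<in> W" "a < z" "z < b" "a \<notin> W" "b \<notin> W"
  shows "W \<subseteq> {a<..<b}"
proof
  fix w assume "w \<in> W"
  have "a < w"
  proof (rule ccontr)
    assume "\<not> a < w"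
    then have "a \<in> W" using mem_is_interval_1_I[OF assms(1) \<open>w \<in> W\<close> assms(2)] assms(3) by simp
    then show False using assms(5) by blast
  qed
  moreover have "w < b"
  proof (rule ccontr)
    assume "\<not> w < b"
    then have "b \<in> W" using mem_is_interval_1_I[OF assms(1) assms(2) \<open>w \<in> W\<close>] assms(4) by simp
    then show False using assms(6) by blast
  qed
  ultimately show "w \<in> {a<..<b}" by simp
qed

lemma maxintsD:
  assumes "U \<in> maxints f"
  shows "U \<noteq> {}" "is_interval U" "const_on f U"
    "\<And>V. is_interval V \<Longrightarrow> const_on f V \<Longrightarrow> U \<subseteq> V \<Longrightarrow> V = U"
  using assms unfolding maxints_def by auto

lemma maxints_thr_eq:
  "U \<in> maxints f \<Longrightarrow> x \<in> U \<Longrightarrow> y \<in> U \<Longrightarrow> thr f x = thr f y"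
  using maxintsD(3) unfolding const_on_def by blast

lemma maxints_absorb:
  assumes U: "U \<in> maxints f" and V: "is_interval V" "const_on f V" and "U \<inter> V \<noteq> {}"
  shows "V \<subseteq> U"
proof -
  have "is_interval (U \<union> V)"
    using maxintsD(2)[OF U] V(1) \<open>U \<inter> V \<noteq> {}\<close> by (simp add: is_interval_connected_1 connected_Un)
  moreover have "const_on f (U \<union> V)"
    using maxintsD(3)[OF U] V(2) \<open>U \<inter> V \<noteq> {}\<close> unfolding const_on_def by blast
  ultimately have "U \<union> V = U" using maxintsD(4)[OF U] by blast
  then show ?thesis by blast
qed

lemma maxints_disjoint:
  "U \<in> maxints f \<Longrightarrow> V \<in> maxints f \<Longrightarrow> U \<inter> V \<noteq> {} \<Longrightarrow> U = V"
  using maxints_absorb maxintsD(2,3) by (metis inf_commute subset_antisym)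

text \<open>The maximal interval through \<open>x\<close> is the connected component of \<open>x\<close> in its level set.\<close>
lemma ex_maxints_mem:
  fixes f :: "real \<Rightarrow> real"
  shows "\<exists>U\<in>maxints f. x \<in> U"
proof -
  define M where "M = connected_component_set {y. thr f y = thr f x} x"
  have xM: "x \<in> M" unfolding M_def by simp
  have "M \<subseteq> {y. thr f y = thr f x}" unfolding M_def by (rule connected_component_subset)
  then have const: "const_on f M" unfolding const_on_def by blast
  have maximal: "V = M" if "is_interval V" "const_on f V" "M \<subseteq> V" for V
  proof
    have "x \<in> V" using xM that(3) by blast
    then have "V \<subseteq> {y. thr f y = thr f x}" using that(2) unfolding const_on_def by blast
    then show "V \<subseteq> M"
      unfolding M_def using \<open>x \<in> V\<close> that(1)
      by (intro connected_component_maximal) (auto simp: is_interval_connected_1)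
  qed (use that in blast)
  have "is_interval M" unfolding M_def is_interval_connected_1 by simp
  then have "M \<in> maxints f" unfolding maxints_def using xM const maximal by blast
  then show ?thesis using xM by blast
qed

lemma good_partition_maxints: "good_partition f (maxints f)"
  unfolding good_partition_def
  using ex_maxints_mem[of f] maxintsD(1,2,3) maxints_disjoint by blast

lemma card_maxints_le:
  assumes "finite P" and P: "good_partition f P"
  shows "finite (maxints f)" "card (maxints f) \<le> card P"
proof -
  have "\<exists>C\<in>P. C \<noteq> {} \<and> C \<subseteq> U" if U: "U \<in> maxints f" for U
  proof -
    obtain x where "x \<in> U" using maxintsD(1)[OF U] by blast
    moreover obtain C where C: "C \<in> P" "x \<in> C"
      using P unfolding good_partition_def by (metis UNIV_I Union_iff)
    moreover have "is_interval C" "const_on f C" using P C(1) unfolding good_partition_def by auto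
    ultimately have "C \<subseteq> U" using maxints_absorb[OF U] by blast
    then show ?thesis using C by blast
  qed
  then obtain cell where cell: "\<And>U. U \<in> maxints f \<Longrightarrow> cell U \<in> P \<and> cell U \<noteq> {} \<and> cell U \<subseteq> U"
    by metis
  have "inj_on cell (maxints f)"
  proof (rule inj_onI)
    fix U V assume UV: "U \<in> maxints f" "V \<in> maxints f" "cell U = cell V"
    then have "U \<inter> V \<noteq> {}" using cell[OF UV(1)] cell[OF UV(2)] by blast
    then show "U = V" using maxints_disjoint UV(1,2) by blast
  qed
  moreover have "cell ` maxints f \<subseteq> P" using cell by blast
  ultimately show "finite (maxints f)" "card (maxints f) \<le> card P"
    using \<open>finite P\<close> by (auto intro: inj_on_finite card_inj_on_le)
qed

lemma Cr_attained:
  assumes "Cr h \<noteq> \<infinity>"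
  obtains P where "finite P" "good_partition h P" "Cr h = enat (card P)"
proof -
  let ?A = "{enat (card P) | P. finite P \<and> good_partition h P}"
  have "?A \<noteq> {}"
  proof
    assume "?A = {}"
    then have "Cr h = \<infinity>" unfolding Cr_def by (metis Inf_empty top_enat_def)
    then show False using assms by simp
  qed
  then obtain k where "k \<in> ?A" by blast
  then have "Cr h \<in> ?A" unfolding Cr_def by (rule wellorder_InfI)
  then show ?thesis using that by blast
qed

lemma Cr_eq_card_maxints:
  assumes "Cr f \<noteq> \<infinity>"
  shows "finite (maxints f)" "Cr f = enat (card (maxints f))"
proof -
  obtain P where P: "finite P" "good_partition f P" "Cr f = enat (card P)"
    using Cr_attained[OF assms] by blast
  show fin: "finite (maxints f)" using card_maxints_le[OF P(1,2)] by blast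
  have "Cr f \<le> enat (card (maxints f))"
    unfolding Cr_def by (rule Inf_lower) (use fin good_partition_maxints in blast)
  then have "card P \<le> card (maxints f)" using P(3) by simp
  then show "Cr f = enat (card (maxints f))"
    using card_maxints_le(2)[OF P(1,2)] P(3) by simp
qed

lemma maxints_between:
  fixes f :: "real \<Rightarrow> real"
  assumes U: "U \<in> maxints f" and U': "U' \<in> maxints f" and "U \<noteq> U'"
    and a: "a \<in> U" and a': "a' \<in> U'" and "a < a'" and "thr f a = thr f a'"
  obtains W where "W \<in> maxints f" "W \<subseteq> {a<..<a'}" "\<And>x. x \<in> W \<Longrightarrow> thr f x \<noteq> thr f a"
proof -
  have "\<exists>z. a < z \<and> z < a' \<and> thr f z \<noteq> thr f a"
  proof (rule ccontr)
    assume "\<nexists>z. a < z \<and> z < a' \<and> thr f z \<noteq> thr f a"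
    then have "const_on f {a..a'}"
      using \<open>thr f a = thr f a'\<close> unfolding const_on_def
      by (metis atLeastAtMost_iff order_le_less)
    moreover have "U \<inter> {a..a'} \<noteq> {}" using a \<open>a < a'\<close> by auto
    ultimately have "{a..a'} \<subseteq> U" using maxints_absorb[OF U] by (metis is_interval_cc)
    then have "a' \<in> U" using \<open>a < a'\<close> by auto
    then show False using maxints_disjoint[OF U U'] a' \<open>U \<noteq> U'\<close> by blast
  qed
  then obtain z where z: "a < z" "z < a'" "thr f z \<noteq> thr f a" by blast
  obtain W where W: "W \<in> maxints f" "z \<in> W" using ex_maxints_mem by blast
  have thrW: "thr f x \<noteq> thr f a" if "x \<in> W" for x
    using maxints_thr_eq[OF W(1) that W(2)] z(3) by simp
  have "a \<notin> W" "a' \<notin> W" using thrW \<open>thr f a = thr f a'\<close> by auto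
  have "W \<subseteq> {a<..<a'}"
    using is_interval_subset_greaterThanLessThan[OF maxintsD(2)[OF W(1)] W(2)] z(1,2)
      \<open>a \<notin> W\<close> \<open>a' \<notin> W\<close> .
  then show ?thesis using that W(1) thrW by blast
qed

text \<open>
Each point of \<open>S\<close> that is not the last one of its cell gets the gap set before its successor
in that cell; these gap sets are pairwise disjoint, hence distinct.
\<close>
lemma card_non_last_le_card_gaps:
  fixes S :: "real set" and cell :: "real \<Rightarrow> real set"
  assumes "finite S" "finite G" "{} \<notin> G"
    and cell: "\<And>x. x \<in> S \<Longrightarrow> cell x \<in> Q"
    and cell_eq: "\<And>V V' x. V \<in> Q \<Longrightarrow> V' \<in> Q \<Longrightarrow> x \<in> V \<Longrightarrow> x \<in> V' \<Longrightarrow> V = V'"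
    and gap: "\<And>x y. x \<in> S \<Longrightarrow> y \<in> S \<Longrightarrow> cell x = cell y \<Longrightarrow> x < y \<Longrightarrow>
      \<exists>W\<in>G. W \<subseteq> {x<..<y} \<inter> cell x"
  shows "card {x\<in>S. \<exists>y\<in>S. cell y = cell x \<and> x < y} \<le> card G"
proof -
  define N where "N = {x\<in>S. \<exists>y\<in>S. cell y = cell x \<and> x < y}"
  define succ where "succ x = Min {y\<in>S. cell y = cell x \<and> x < y}" for x
  have succ: "succ x \<in> S" "cell (succ x) = cell x" "x < succ x" if "x \<in> N" for x
  proof -
    have "succ x \<in> {y\<in>S. cell y = cell x \<and> x < y}"
      unfolding succ_def using \<open>finite S\<close> that unfolding N_def by (intro Min_in) auto
    then show "succ x \<in> S" "cell (succ x) = cell x" "x < succ x" by auto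
  qed
  have succ_le: "succ x \<le> y" if "y \<in> S" "cell y = cell x" "x < y" for x y
    using \<open>finite S\<close> that unfolding succ_def by (intro Min_le) auto
  have "\<forall>x\<in>N. \<exists>W. W \<in> G \<and> W \<subseteq> {x<..<succ x} \<inter> cell x"
    using gap succ unfolding N_def by (metis (mono_tags, lifting) mem_Collect_eq)
  then have "\<exists>W. \<forall>x\<in>N. W x \<in> G \<and> W x \<subseteq> {x<..<succ x} \<inter> cell x" by (rule bchoice)
  then obtain W where W: "\<And>x. x \<in> N \<Longrightarrow> W x \<in> G \<and> W x \<subseteq> {x<..<succ x} \<inter> cell x"
    by blast
  have W_neq: "W x \<noteq> W y" if x: "x \<in> N" and y: "y \<in> N" and "x < y" for x y
  proof
    assume eq: "W x = W y"
    have "W x \<noteq> {}" using W[OF x] \<open>{} \<notin> G\<close> by metis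
    then obtain w where "w \<in> W x" by blast
    then have "w \<in> cell x" "w \<in> cell y" "w < succ x" "y < w"
      using W[OF x] W[OF y] eq by auto
    then have "cell y = cell x" using cell cell_eq x y unfolding N_def by blast
    then have "succ x \<le> y" using succ_le y \<open>x < y\<close> unfolding N_def by blast
    then show False using \<open>w < succ x\<close> \<open>y < w\<close> by simp
  qed
  have "inj_on W N"
    by (rule inj_onI) (metis W_neq linorder_neqE_linordered_idom)
  moreover have "W ` N \<subseteq> G" using W by blast
  ultimately show ?thesis unfolding N_def using \<open>finite G\<close> by (rule card_inj_on_le)
qed

lemma card_le_card_gaps_plus_card_cells:
  fixes S :: "real set" and cell :: "real \<Rightarrow> real set"
  assumes "finite S" "finite Q" "finite G" "{} \<notin> G"
    and cell: "\<And>x. x \<in> S \<Longrightarrow> cell x \<in> Q"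
    and cell_eq: "\<And>V V' x. V \<in> Q \<Longrightarrow> V' \<in> Q \<Longrightarrow> x \<in> V \<Longrightarrow> x \<in> V' \<Longrightarrow> V = V'"
    and gap: "\<And>x y. x \<in> S \<Longrightarrow> y \<in> S \<Longrightarrow> cell x = cell y \<Longrightarrow> x < y \<Longrightarrow>
      \<exists>W\<in>G. W \<subseteq> {x<..<y} \<inter> cell x"
  shows "card S \<le> card G + card Q"
proof -
  define N where "N = {x\<in>S. \<exists>y\<in>S. cell y = cell x \<and> x < y}"
  have "inj_on cell (S - N)"
    unfolding N_def by (rule inj_onI) (auto intro: order.antisym simp: not_less)
  then have "card (S - N) \<le> card Q"
    using cell \<open>finite Q\<close> by (intro card_inj_on_le) auto
  moreover have "card N \<le> card G"
    unfolding N_def using card_non_last_le_card_gaps assms by blast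
  moreover have "card S \<le> card N + card (S - N)"
    using card_Un_le[of N "S - N"] N_def by (simp add: Un_absorb1)
  ultimately show ?thesis by linarith
qed

lemma maxints_disagreeing_between:
  fixes f g :: "real \<Rightarrow> real"
  assumes V: "is_interval V" "const_on g V" and "x \<in> V" "y \<in> V" "x < y"
    and U: "U \<in> maxints f" "x \<in> U" "thr f x = thr g x"
    and U': "U' \<in> maxints f" "y \<in> U'" "thr f y = thr g y" and "U \<noteq> U'"
  obtains W where "W \<in> maxints f" "W \<subseteq> {x<..<y} \<inter> V" "\<And>z. z \<in> W \<Longrightarrow> thr f z \<noteq> thr g z"
proof -
  have g_on_V: "thr g z = thr g x" if "z \<in> V" for z
    using V(2) \<open>x \<in> V\<close> that unfolding const_on_def by blast
  have "thr f x = thr f y" using U(3) U'(3) g_on_V \<open>y \<in> V\<close> by simp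
  then obtain W where W: "W \<in> maxints f" "W \<subseteq> {x<..<y}"
      "\<And>z. z \<in> W \<Longrightarrow> thr f z \<noteq> thr f x"
    using maxints_between[OF U(1) U'(1) \<open>U \<noteq> U'\<close> U(2) U'(2) \<open>x < y\<close>] by blast
  have "W \<subseteq> V"
  proof
    fix z assume "z \<in> W"
    then have "x \<le> z" "z \<le> y" using W(2) by auto
    then show "z \<in> V" using mem_is_interval_1_I[OF V(1) \<open>x \<in> V\<close> \<open>y \<in> V\<close>] by blast
  qed
  then show ?thesis using that W U(3) g_on_V by blast
qed

lemma card_agreeing_maxints_le:
  fixes f g :: "real \<Rightarrow> real"
  assumes fin: "finite (maxints f)" and "finite Q" and Q: "good_partition g Q"
  shows "card {U\<in>maxints f. \<exists>x\<in>U. thr f x = thr g x}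
         \<le> card {U\<in>maxints f. \<forall>x\<in>U. thr f x \<noteq> thr g x} + card Q"
proof -
  define B where "B = {U\<in>maxints f. \<exists>x\<in>U. thr f x = thr g x}"
  define G where "G = {U\<in>maxints f. \<forall>x\<in>U. thr f x \<noteq> thr g x}"
  from Q have "\<Union>Q = UNIV"
    and cell_eq: "\<And>V V' x. V \<in> Q \<Longrightarrow> V' \<in> Q \<Longrightarrow> x \<in> V \<Longrightarrow> x \<in> V' \<Longrightarrow> V = V'"
    and Q_interval: "\<And>V. V \<in> Q \<Longrightarrow> is_interval V"
    and Q_const: "\<And>V. V \<in> Q \<Longrightarrow> const_on g V"
    unfolding good_partition_def by blast+
  have "\<forall>x. \<exists>V. V \<in> Q \<and> x \<in> V" using \<open>\<Union>Q = UNIV\<close> by blast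
  then obtain cell where cell: "\<And>x. cell x \<in> Q \<and> x \<in> cell x" by metis
  have "\<forall>U\<in>B. \<exists>x. x \<in> U \<and> thr f x = thr g x" unfolding B_def by blast
  then obtain p where p: "\<And>U. U \<in> B \<Longrightarrow> p U \<in> U \<and> thr f (p U) = thr g (p U)"
    by metis
  have B_maxints: "B \<subseteq> maxints f" unfolding B_def by blast
  have "inj_on p B"
  proof (rule inj_onI)
    fix U V assume "U \<in> B" "V \<in> B" "p U = p V"
    then have "U \<inter> V \<noteq> {}" using p by (metis IntI empty_iff)
    then show "U = V" using maxints_disjoint B_maxints \<open>U \<in> B\<close> \<open>V \<in> B\<close> by blast
  qed
  then have "card B = card (p ` B)" by (simp add: card_image)
  also have "\<dots> \<le> card G + card Q"
  proof (rule card_le_card_gaps_plus_card_cells)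
    show "finite (p ` B)" using fin B_maxints finite_subset by blast
    show "finite G" unfolding G_def using fin by simp
    show "{} \<notin> G" unfolding G_def using maxintsD(1) by blast
    show "\<And>x. cell x \<in> Q" using cell by blast
    fix x y assume "x \<in> p ` B" "y \<in> p ` B" "cell x = cell y" "x < y"
    then obtain U U' where U: "U \<in> B" "x = p U" and U': "U' \<in> B" "y = p U'" by blast
    have x: "x \<in> cell x" "U \<in> maxints f" "x \<in> U" "thr f x = thr g x"
      using cell[of x] U p B_maxints by auto
    have y: "y \<in> cell x" "U' \<in> maxints f" "y \<in> U'" "thr f y = thr g y"
      using cell[of y] \<open>cell x = cell y\<close> U' p B_maxints by auto
    have "U \<noteq> U'" using U U' \<open>x < y\<close> by auto
    obtain W where "W \<in> maxints f" "W \<subseteq> {x<..<y} \<inter> cell x"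
        "\<And>z. z \<in> W \<Longrightarrow> thr f z \<noteq> thr g z"
      using maxints_disagreeing_between[OF Q_interval Q_const x(1) y(1) \<open>x < y\<close> x(2-4) y(2-4)
          \<open>U \<noteq> U'\<close>] cell by blast
    then show "\<exists>W\<in>G. W \<subseteq> {x<..<y} \<inter> cell x" unfolding G_def by blast
  qed (use \<open>finite Q\<close> cell_eq in auto)
  finally show ?thesis unfolding B_def G_def .
qed

theorem lemma3p1:
  fixes f g :: "real \<Rightarrow> real"
  assumes "Cr f \<noteq> \<infinity>"
  shows "ereal ((1 / real (the_enat (Cr f))) *
            (\<Sum>U\<in>maxints f. if (\<forall>x\<in>U. thr f x \<noteq> thr g x) then 1 else 0))
         \<ge> (if Cr g = \<infinity> then -\<infinity>
             else ereal (1/2 * (1 - 2 * (real (the_enat (Cr g)) / real (the_enat (Cr f))))))"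
proof (cases "Cr g = \<infinity>")
  case False
  obtain Q where Q: "finite Q" "good_partition g Q" "Cr g = enat (card Q)"
    using Cr_attained[OF False] by blast
  note fin = Cr_eq_card_maxints(1)[OF assms]
  define n where "n = card (maxints f)"
  define G where "G = {U\<in>maxints f. \<forall>x\<in>U. thr f x \<noteq> thr g x}"
  have "n > 0"
    unfolding n_def using fin ex_maxints_mem[of f] card_gt_0_iff by blast
  have "n = card {U\<in>maxints f. \<exists>x\<in>U. thr f x = thr g x} + card G"
    unfolding n_def G_def using fin
    by (subst card_Un_disjoint[symmetric]) (auto intro: arg_cong[where f=card])
  then have "real n / 2 - real (card Q) \<le> real (card G)"
    using card_agreeing_maxints_le[OF fin Q(1,2)] unfolding G_def by linarith
  then have "(real n / 2 - real (card Q)) / real n \<le> real (card G) / real n"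
    by (rule divide_right_mono) simp
  also have "(real n / 2 - real (card Q)) / real n = 1/2 * (1 - 2 * (real (card Q) / real n))"
    using \<open>n > 0\<close> by (simp add: field_simps)
  finally have "1/2 * (1 - 2 * (real (card Q) / real n)) \<le> real (card G) / real n" .
  moreover have "(\<Sum>U\<in>maxints f. if \<forall>x\<in>U. thr f x \<noteq> thr g x then 1 else 0) = real (card G)"
    unfolding G_def using fin by (simp add: sum.If_cases Int_def)
  ultimately show ?thesis
    using Cr_eq_card_maxints(2)[OF assms] Q(3) False unfolding n_def by simp
qed simp

end
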